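(* Let $K$ be a totally ordered quasi-field of characteristic $1$ and let $P,Q\in K\{X_1,\dots,X_n\}$. If there exists an integer $m>0$ with $P^m=Q^m$, then $P=Q$.
   Context: A quasi-field of characteristic $1$ is a commutative semiring $K$ with $1+1=1$ in which every nonzero element is multiplicatively invertible; ordered by $u\le v$ iff $u+v=v$, totally ordered meaning the order is total. $K\{X_1,\dots,X_n\}$ is the image of $K[X_1,\dots,X_n]$ in its quasi-field of fractions, i.e. the quotient by $P\sim Q$ iff $RP=RQ$ for some nonzero $R$; it is a cancellative commutative semiring of characteristic $1$. *)

theory Defs
  imports "HOL-Library.Poly_Mapping"
begin

definition quasi_field_char1 :: "'a::comm_semiring_1 itself \<Rightarrow> bool" where
  "quasi_field_char1 _ \<longleftrightarrow> (1::'a) + 1 = 1 \<and> (\<forall>x::'a. x \<noteq> 0 \<longrightarrow> (\<exists>y. x * y = 1))"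

definition qf_le :: "'a::comm_semiring_1 \<Rightarrow> 'a \<Rightarrow> bool" where
  "qf_le u v \<longleftrightarrow> u + v = v"

definition totally_ordered_qf :: "'a::comm_semiring_1 itself \<Rightarrow> bool" where
  "totally_ordered_qf T \<longleftrightarrow> quasi_field_char1 T \<and> (\<forall>u v::'a. qf_le u v \<or> qf_le v u)"

text \<open>Polynomials over K in variables X_0, X_1, ...: finitely supported maps from
  monomials (exponent vectors) to coefficients.\<close>

type_synonym 'a mpoly = "(nat \<Rightarrow>\<^sub>0 nat) \<Rightarrow>\<^sub>0 'a"

definition in_poly_ring :: "nat \<Rightarrow> 'a::comm_semiring_1 mpoly \<Rightarrow> bool" where
  "in_poly_ring n P \<longleftrightarrow> (\<forall>mo \<in> Poly_Mapping.keys P. Poly_Mapping.keys (mo::nat \<Rightarrow>\<^sub>0 nat) \<subseteq> {..<n})"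

text \<open>Equality in K{X_1..X_n} (image in the quasi-field of fractions):
  P \<sim> Q iff R P = R Q for some nonzero R in K[X_1..X_n].\<close>

definition frac_eq :: "nat \<Rightarrow> 'a::comm_semiring_1 mpoly \<Rightarrow> 'a mpoly \<Rightarrow> bool" where
  "frac_eq n P Q \<longleftrightarrow> (\<exists>R. in_poly_ring n R \<and> R \<noteq> 0 \<and> R * P = R * Q)"

end

theory Submission
  imports Defs
begin

text \<open>
  In a commutative semiring of characteristic 1 (that is, with
  \<open>1 + 1 = 1\<close>) addition is idempotent, and the binomial expansion of \<open>(x + y)^(j+1)\<close>
  collapses to \<open>x^(j+1) + y (x + y)^j\<close>.  Consequently
  \<open>x (x + y)^(m-1) = x^m + x y (x + y)^(m-2)\<close>, an expression that is symmetric in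
  \<open>x\<close> and \<open>y\<close> except for the summand \<open>x^m\<close>.  Hence \<open>R x^m = R y^m\<close> implies
  \<open>T x = T y\<close> for the multiplier \<open>T = R (x + y)^(m-1)\<close>.

  To apply this to polynomials we need \<open>T \<noteq> 0\<close>.  Over a quasi-field of
  characteristic 1 the coefficients have no zero divisors and are zero-sum-free, so a
  product of nonzero polynomials is nonzero: its coefficient at the sum of two
  exponents in the supports is a sum containing a nonzero term.
\<close>

lemma add_idem_char1:
  fixes x :: "'a::comm_semiring_1"
  assumes "(1::'a) + 1 = 1"
  shows "x + x = x"
proof -
  have "x + x = x * (1 + 1)" by (simp only: distrib_left mult_1_right)
  then show ?thesis using assms by simp
qed

lemma zero_sum_free_char1:
  fixes x y :: "'a::comm_semiring_1"
  assumes "(1::'a) + 1 = 1" and "x + y = 0"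
  shows "x = 0"
proof -
  have "x = x + (x + y)" using assms(2) by simp
  also have "\<dots> = (x + x) + y" by (simp add: add.assoc)
  also have "\<dots> = 0" using add_idem_char1[OF assms(1)] assms(2) by simp
  finally show ?thesis .
qed

text \<open>The collapsed binomial formula: every monomial \<open>x^i y^(j+1-i)\<close> with \<open>i \<le> j\<close>
  already occurs in \<open>y (x + y)^j\<close>.\<close>

lemma power_sum_char1:
  fixes x y :: "'a::comm_semiring_1"
  assumes one: "(1::'a) + 1 = 1"
  shows "(x + y) ^ Suc j = x ^ Suc j + y * (x + y) ^ j"
proof (induction j)
  case 0
  then show ?case by simp
next
  case (Suc j)
  have absorb: "x ^ Suc j + (x + y) ^ Suc j = (x + y) ^ Suc j"
    using Suc add_idem_char1[OF one, of "x ^ Suc j"] by (simp add: add.assoc [symmetric])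
  have "(x + y) ^ Suc (Suc j) = (x + y) * (x ^ Suc j + y * (x + y) ^ j)"
    using Suc by simp
  also have "\<dots> = x ^ Suc (Suc j) + y * (x ^ Suc j + (x + y) ^ Suc j)"
    by (simp add: algebra_simps)
  finally show ?case unfolding absorb .
qed

lemma power_cancel_char1:
  fixes R x y :: "'a::comm_semiring_1"
  assumes one: "(1::'a) + 1 = 1" and "m > 0" and eq: "R * x ^ m = R * y ^ m"
  shows "(R * (x + y) ^ (m - 1)) * x = (R * (x + y) ^ (m - 1)) * y"
proof (cases "m = 1")
  case True
  then show ?thesis using eq by simp
next
  case False
  then obtain k where m: "m = Suc (Suc k)"
    using \<open>m > 0\<close> by (metis One_nat_def Suc_pred not0_implies_Suc)
  have expand: "u * (u + v) ^ Suc k = u ^ m + u * v * (u + v) ^ k" for u v :: 'a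
    unfolding m power_sum_char1[OF one] by (simp add: algebra_simps)
  have "(R * (x + y) ^ (m - 1)) * x = R * (x * (x + y) ^ Suc k)"
    by (simp add: m ac_simps)
  also have "\<dots> = R * x ^ m + R * (x * y * (x + y) ^ k)"
    unfolding expand by (rule distrib_left)
  also have "\<dots> = R * y ^ m + R * (y * x * (y + x) ^ k)"
    using eq by (simp add: ac_simps)
  also have "\<dots> = R * (y * (y + x) ^ Suc k)"
    unfolding expand by (rule distrib_left [symmetric])
  also have "\<dots> = (R * (x + y) ^ (m - 1)) * y"
    by (simp add: m ac_simps)
  finally show ?thesis .
qed

lemma quasi_field_no_zero_divisors:
  fixes x y :: "'a::comm_semiring_1"
  assumes "quasi_field_char1 TYPE('a)" and "x \<noteq> 0" and "y \<noteq> 0"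
  shows "x * y \<noteq> 0"
proof
  assume xy: "x * y = 0"
  obtain z where "x * z = 1"
    using assms(1,2) unfolding quasi_field_char1_def by blast
  then have "y = z * (x * y)" by (metis mult.assoc mult.commute mult_1)
  then show False using xy \<open>y \<noteq> 0\<close> by simp
qed

lemma poly_mapping_one_add_one:
  assumes "(1::'a::comm_semiring_1) + 1 = 1"
  shows "(1::'b::comm_monoid_add \<Rightarrow>\<^sub>0 'a) + 1 = 1"
proof (rule poly_mapping_eqI)
  fix t
  show "Poly_Mapping.lookup (1 + 1 :: 'b \<Rightarrow>\<^sub>0 'a) t = Poly_Mapping.lookup 1 t"
    unfolding lookup_add by (rule add_idem_char1[OF assms])
qed

lemma Sum_any_nonzero_if_term_nonzero:
  fixes h :: "'b \<Rightarrow> 'a::comm_monoid_add"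
  assumes zero_sum_free: "\<And>x y::'a. x + y = 0 \<Longrightarrow> x = 0"
    and fin: "finite {x. h x \<noteq> 0}" and nz: "h a \<noteq> 0"
  shows "Sum_any h \<noteq> 0"
proof
  assume "Sum_any h = 0"
  moreover have "Sum_any h = h a + sum h ({x. h x \<noteq> 0} - {a})"
    using fin nz by (simp add: Sum_any.expand_set sum.remove)
  ultimately show False using zero_sum_free nz by metis
qed

text \<open>Over a zero-sum-free coefficient semiring without zero divisors, the product of
  nonzero polynomials is nonzero: if \<open>a\<close>, \<open>b\<close> lie in the supports of \<open>f\<close>, \<open>g\<close>, the
  coefficient of \<open>f g\<close> at \<open>a + b\<close> is a sum containing the nonzero term \<open>f_a g_b\<close>.
  No order or cancellation on the monomials is required.\<close>

lemma mult_poly_mapping_nonzero: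
  fixes f g :: "'b::comm_monoid_add \<Rightarrow>\<^sub>0 'a::comm_semiring_1"
  assumes zero_sum_free: "\<And>x y::'a. x + y = 0 \<Longrightarrow> x = 0"
    and no_zero_divisors: "\<And>x y::'a. x \<noteq> 0 \<Longrightarrow> y \<noteq> 0 \<Longrightarrow> x * y \<noteq> 0"
    and "f \<noteq> 0" and "g \<noteq> 0"
  shows "f * g \<noteq> 0"
proof -
  obtain a where a: "Poly_Mapping.lookup f a \<noteq> 0"
    using \<open>f \<noteq> 0\<close> by (auto simp: poly_mapping_eq_iff fun_eq_iff)
  obtain b where b: "Poly_Mapping.lookup g b \<noteq> 0"
    using \<open>g \<noteq> 0\<close> by (auto simp: poly_mapping_eq_iff fun_eq_iff)
  define inner where "inner l = (\<Sum>q. Poly_Mapping.lookup g q when a + b = l + q)" for l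
  have "inner a \<noteq> 0"
    unfolding inner_def
  proof (rule Sum_any_nonzero_if_term_nonzero)
    show "\<And>x y::'a. x + y = 0 \<Longrightarrow> x = 0" by (fact zero_sum_free)
    show "finite {q. (Poly_Mapping.lookup g q when a + b = a + q) \<noteq> 0}"
      by (rule finite_subset[of _ "Poly_Mapping.keys g"]) (auto simp: in_keys_iff)
    show "(Poly_Mapping.lookup g b when a + b = a + b) \<noteq> 0" using b by simp
  qed
  then have term_nonzero: "Poly_Mapping.lookup f a * inner a \<noteq> 0"
    using a no_zero_divisors by blast
  have finite_support: "finite {l. Poly_Mapping.lookup f l * inner l \<noteq> 0}"
    by (rule finite_subset[of _ "Poly_Mapping.keys f"]) (auto simp: in_keys_iff)
  have "(\<Sum>l. Poly_Mapping.lookup f l * inner l) \<noteq> 0"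
    using zero_sum_free finite_support term_nonzero by (rule Sum_any_nonzero_if_term_nonzero)
  then have "Poly_Mapping.lookup (f * g) (a + b) \<noteq> 0"
    by (simp add: lookup_mult inner_def)
  then show ?thesis by auto
qed

lemma power_poly_mapping_nonzero:
  fixes f :: "'b::comm_monoid_add \<Rightarrow>\<^sub>0 'a::comm_semiring_1"
  assumes "\<And>x y::'a. x + y = 0 \<Longrightarrow> x = 0"
    and "\<And>x y::'a. x \<noteq> 0 \<Longrightarrow> y \<noteq> 0 \<Longrightarrow> x * y \<noteq> 0"
    and "f \<noteq> 0"
  shows "f ^ k \<noteq> 0"
  by (induction k) (simp_all add: mult_poly_mapping_nonzero[OF assms(1,2,3)])

lemma in_poly_ring_add:
  assumes "in_poly_ring n A" and "in_poly_ring n B"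
  shows "in_poly_ring n (A + B)"
  using assms keys_add[of A B] unfolding in_poly_ring_def by blast

lemma in_poly_ring_mult:
  assumes "in_poly_ring n A" and "in_poly_ring n B"
  shows "in_poly_ring n (A * B)"
  unfolding in_poly_ring_def
proof
  fix mo assume "mo \<in> Poly_Mapping.keys (A * B)"
  then obtain a b where "mo = a + b" "a \<in> Poly_Mapping.keys A" "b \<in> Poly_Mapping.keys B"
    using keys_mult by blast
  then show "Poly_Mapping.keys mo \<subseteq> {..<n}"
    using assms keys_add[of a b] unfolding in_poly_ring_def by (meson Un_least order_trans)
qed

lemma in_poly_ring_one: "in_poly_ring n 1"
  unfolding in_poly_ring_def by simp

lemma in_poly_ring_power:
  assumes "in_poly_ring n A"
  shows "in_poly_ring n (A ^ k)"
  by (induction k) (simp_all add: assms in_poly_ring_one in_poly_ring_mult)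

lemma frac_eq_refl: "frac_eq n P P"
  unfolding frac_eq_def using in_poly_ring_one by fastforce

theorem lemma3p9:
  fixes P Q :: "'a::comm_semiring_1 mpoly" and n m :: nat
  assumes "totally_ordered_qf TYPE('a)"
    and "in_poly_ring n P" and "in_poly_ring n Q"
    and "m > 0"
    and "frac_eq n (P ^ m) (Q ^ m)"
  shows "frac_eq n P Q"
proof -
  have qf: "quasi_field_char1 TYPE('a)" and one: "(1::'a) + 1 = 1"
    using assms(1) unfolding totally_ordered_qf_def quasi_field_char1_def by auto
  have poly_one: "(1::'a mpoly) + 1 = 1" by (rule poly_mapping_one_add_one[OF one])
  obtain R where R: "in_poly_ring n R" "R \<noteq> 0" "R * P ^ m = R * Q ^ m"
    using assms(5) unfolding frac_eq_def by blast
  define T where "T = R * (P + Q) ^ (m - 1)"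
  have cancel: "T * P = T * Q"
    unfolding T_def by (rule power_cancel_char1[OF poly_one assms(4) R(3)])
  show ?thesis
  proof (cases "P + Q = 0")
    case True
    then have "P = 0" and "Q = 0"
      using zero_sum_free_char1[OF poly_one] by (metis add.commute)+
    then show ?thesis by (simp add: frac_eq_refl)
  next
    case False
    have "T \<noteq> 0"
      unfolding T_def
      using zero_sum_free_char1[OF one] quasi_field_no_zero_divisors[OF qf] R(2) False
      by (intro mult_poly_mapping_nonzero power_poly_mapping_nonzero)
    moreover have "in_poly_ring n T"
      unfolding T_def using R(1) assms(2,3)
      by (intro in_poly_ring_mult in_poly_ring_power in_poly_ring_add)
    ultimately show ?thesis using cancel unfolding frac_eq_def by blast
  qed
qed

end
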